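(* Let $f_1,f_2$ be strongly hyperbolic functions. Any two distinct elements $C,D\in\mathcal{C}^-(f_1,f_2)$ have at most two points in common.
   Context: Identify $\mathbb{S}^1$ with $\mathbb{R}\cup\{\infty\}$, $\mathcal{P}=\mathbb{S}^1\times\mathbb{S}^1$, $\mathbb{R}^+=(0,\infty)$. A function $f:\mathbb{R}^+\to\mathbb{R}^+$ is strongly hyperbolic if: (1) $\lim_{x\to0+}f(x)=+\infty$, $\lim_{x\to+\infty}f(x)=0$; (2) $f$ strictly convex; (3) $\lim_{x\to+\infty}f(x+b)/f(x)=1$ for each $b\in\mathbb{R}$; (4) $f$ differentiable; (5) $\ln|f'|$ strictly convex. For $a>0$, $b,c\in\mathbb{R}$: $f_{a,b,c}(x)=af_1(x+b)+c$ for $x>-b$, $f_{a,b,c}(x)=-af_2(-x-b)+c$ for $x<-b$; $\overline{f_{a,b,c}}=\{(x,f_{a,b,c}(x)):x\ne-b\}\cup\{(-b,\infty),(\infty,c)\}$; $\overline{l_{s,t}}=\{(x,sx+t):x\in\mathbb{R}\}\cup\{(\infty,\infty)\}$; $\mathcal{C}^-(f_1,f_2)=\{\overline{f_{a,b,c}}:a>0,b,c\in\mathbb{R}\}\cup\{\overline{l_{s,t}}:s<0,t\in\mathbb{R}\}$, a set of subsets of $\mathcal{P}$. *)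

theory Defs
  imports "HOL-Analysis.Analysis"
begin

text \<open>The circle S^1 identified with R together with one point at infinity.\<close>
datatype circ = Fin real | Infty

definition strictly_convex_on :: "real set \<Rightarrow> (real \<Rightarrow> real) \<Rightarrow> bool" where
  "strictly_convex_on S f \<longleftrightarrow> convex S \<and>
     (\<forall>x\<in>S. \<forall>y\<in>S. \<forall>u::real. x \<noteq> y \<and> 0 < u \<and> u < 1 \<longrightarrow>
        f (u * x + (1 - u) * y) < u * f x + (1 - u) * f y)"

text \<open>Strongly hyperbolic functions R+ -> R+ (only values on (0,inf) matter).\<close>
definition strongly_hyperbolic :: "(real \<Rightarrow> real) \<Rightarrow> bool" where
  "strongly_hyperbolic f \<longleftrightarrow>
     (\<forall>x>0. f x > 0) \<and>
     filterlim f at_top (at_right 0) \<and>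
     (f \<longlongrightarrow> 0) at_top \<and>
     strictly_convex_on {0<..} f \<and>
     (\<forall>b::real. ((\<lambda>x. f (x + b) / f x) \<longlongrightarrow> 1) at_top) \<and>
     (\<forall>x>0. f differentiable (at x)) \<and>
     strictly_convex_on {0<..} (\<lambda>x. ln \<bar>deriv f x\<bar>)"

definition f_abc :: "(real \<Rightarrow> real) \<Rightarrow> (real \<Rightarrow> real) \<Rightarrow> real \<Rightarrow> real \<Rightarrow> real \<Rightarrow> real \<Rightarrow> real" where
  "f_abc f1 f2 a b c x = (if x > - b then a * f1 (x + b) + c else - a * f2 (- x - b) + c)"

definition graph_abc :: "(real \<Rightarrow> real) \<Rightarrow> (real \<Rightarrow> real) \<Rightarrow> real \<Rightarrow> real \<Rightarrow> real \<Rightarrow> (circ \<times> circ) set" where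
  "graph_abc f1 f2 a b c =
     {(Fin x, Fin (f_abc f1 f2 a b c x)) | x. x \<noteq> - b} \<union> {(Fin (- b), Infty), (Infty, Fin c)}"

definition line_st :: "real \<Rightarrow> real \<Rightarrow> (circ \<times> circ) set" where
  "line_st s t = {(Fin x, Fin (s * x + t)) | x. True} \<union> {(Infty, Infty)}"

definition Cminus :: "(real \<Rightarrow> real) \<Rightarrow> (real \<Rightarrow> real) \<Rightarrow> (circ \<times> circ) set set" where
  "Cminus f1 f2 = {graph_abc f1 f2 a b c | a b c. a > 0}
                  \<union> {line_st s t | s t. s < 0}"

end

theory Submission
  imports Defs
begin

(* Points at infinity are counted directly: a line passes only through (infinity, infinity),
   the graph of f_{a,b,c} only through (-b, infinity) and (infinity, c).  Two lines have at most
   one finite common point.  The graph of f_{a,b,c} is strictly convex and above c to the right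
   of its pole, strictly concave and below c to the left of it, so a decreasing line meets it at
   most twice.  Two graphs with the same pole satisfy (a - a') f_{1,b,0}(x) = c' - c, where
   f_{1,b,0} is injective and nowhere zero: at most one finite common point, none if c = c'.
   For poles -b < -b' put d = b - b'.  Common points right of both poles are the solutions
   u > 0 of a f1(u + d) - a' f1(u) = c' - c, shifted by -b'; those left of both poles come from
   the analogous equation for f2; those between the poles solve a strictly convex equation.
   Strict convexity of ln |f'| lets the derivative of u -> A f(u + d) - A' f(u) change sign at
   most once, from positive to negative, so this function takes every value at most twice, and
   every value K <= 0 at most once since it tends to 0.  Comparing signs of a - a' and c' - c
   then puts all finite common points into one region if c <= c', and at most one into each
   outer region if c' < c. *)

lemma card_le_1_if_no_increasing_pair:
  fixes Z :: "'a::linorder set"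
  assumes "\<And>x y. x \<in> Z \<Longrightarrow> y \<in> Z \<Longrightarrow> x < y \<Longrightarrow> False"
  shows "finite Z \<and> card Z \<le> 1"
proof (cases "Z = {}")
  case False
  then obtain x where "x \<in> Z"
    by blast
  have "Z \<subseteq> {x}"
  proof
    fix y assume "y \<in> Z"
    have "\<not> x < y" "\<not> y < x"
      using assms \<open>x \<in> Z\<close> \<open>y \<in> Z\<close> by blast+
    then show "y \<in> {x}"
      by simp
  qed
  then show ?thesis
    using card_mono[of "{x}" Z] finite_subset[of Z "{x}"] by simp
qed simp

lemma card_le_2_if_no_increasing_triple:
  fixes Z :: "'a::linorder set"
  assumes "\<And>x y z. x \<in> Z \<Longrightarrow> y \<in> Z \<Longrightarrow> z \<in> Z \<Longrightarrow> x < y \<Longrightarrow> y < z \<Longrightarrow> False"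
  shows "finite Z \<and> card Z \<le> 2"
proof (rule ccontr)
  assume "\<not> (finite Z \<and> card Z \<le> 2)"
  then obtain T where T: "T \<subseteq> Z" "card T = 3" "finite T"
    using infinite_arbitrarily_large[of Z 3] obtain_subset_with_card_n[of 3 Z]
    by (cases "finite Z") auto
  then have "T \<noteq> {}"
    by auto
  have "card T - card {Min T, Max T} \<le> card (T - {Min T, Max T})"
    by (rule diff_card_le_card_Diff) simp
  moreover have "card {Min T, Max T} \<le> 2"
    by (rule card_insert_le_m1) simp_all
  ultimately have "1 \<le> card (T - {Min T, Max T})"
    using T(2) by linarith
  then have "T - {Min T, Max T} \<noteq> {}"
    by (intro notI) simp
  then obtain y where y: "y \<in> T" "y \<noteq> Min T" "y \<noteq> Max T"
    by blast
  have "Min T < y" "y < Max T"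
    using Min_le[OF T(3) y(1)] Max_ge[OF T(3) y(1)] y(2,3) by simp_all
  moreover have "Min T \<in> Z" "Max T \<in> Z" "y \<in> Z"
    using T(1) y(1) Min_in[OF T(3) \<open>T \<noteq> {}\<close>] Max_in[OF T(3) \<open>T \<noteq> {}\<close>] by blast+
  ultimately show False
    using assms by blast
qed

lemma finite_card_le_subset:
  assumes "Z \<subseteq> A" and "finite A \<and> card A \<le> n"
  shows "finite Z \<and> card Z \<le> n"
  using finite_subset[OF assms(1)] card_mono[OF _ assms(1)] assms(2) by fastforce

lemma finite_card_image_le:
  assumes "finite A \<and> card A \<le> n"
  shows "finite (g ` A) \<and> card (g ` A) \<le> n"
  using assms card_image_le[of A g] by simp

lemma finite_card_Un_le:
  assumes "finite A \<and> card A \<le> m" and "finite B \<and> card B \<le> n"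
  shows "finite (A \<union> B) \<and> card (A \<union> B) \<le> m + n"
  using assms card_Un_le[of A B] by simp

lemma strictly_convex_onD_chord:
  assumes f: "strictly_convex_on S f" and "x \<in> S" "z \<in> S" and xyz: "x < y" "y < z"
  shows "f y * (z - x) < (z - y) * f x + (y - x) * f z"
proof -
  define u where "u = (z - y) / (z - x)"
  have u: "0 < u" "u < 1" and e: "u * (z - x) = z - y"
    using xyz by (auto simp: u_def field_simps)
  have y: "y = u * x + (1 - u) * z"
    using e by (simp add: algebra_simps)
  have "f y < u * f x + (1 - u) * f z"
    using f assms(2,3) u xyz unfolding y strictly_convex_on_def by auto
  then have "f y * (z - x) < (u * f x + (1 - u) * f z) * (z - x)"
    using xyz by (intro mult_strict_right_mono) auto
  also have "\<dots> = (u * (z - x)) * f x + ((z - x) - u * (z - x)) * f z"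
    by (simp add: algebra_simps)
  also have "\<dots> = (z - y) * f x + (y - x) * f z"
    unfolding e by (simp add: algebra_simps)
  finally show ?thesis .
qed

lemma strictly_convex_on_imp_convex_on:
  assumes "strictly_convex_on S f"
  shows "convex_on S f"
proof (rule convex_onI)
  fix t x y :: real
  assume t: "0 < t" "t < 1" and "x \<in> S" "y \<in> S"
  show "f ((1 - t) *\<^sub>R x + t *\<^sub>R y) \<le> (1 - t) * f x + t * f y"
  proof (cases "x = y")
    case False
    have "\<forall>u. x \<noteq> y \<and> 0 < u \<and> u < 1 \<longrightarrow> f (u * x + (1 - u) * y) < u * f x + (1 - u) * f y"
      using assms \<open>x \<in> S\<close> \<open>y \<in> S\<close> unfolding strictly_convex_on_def by blast
    from this[rule_format, of "1 - t"]
    have "f ((1 - t) * x + (1 - (1 - t)) * y) < (1 - t) * f x + (1 - (1 - t)) * f y"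
      using False t by simp
    then show ?thesis
      by simp
  qed (simp add: algebra_simps)
qed (use assms in \<open>simp add: strictly_convex_on_def\<close>)

lemma strictly_convex_on_cmul:
  assumes "strictly_convex_on S f" and "0 < a"
  shows "strictly_convex_on S (\<lambda>x. a * f x)"
  unfolding strictly_convex_on_def
proof (intro conjI ballI allI impI)
  fix x y u :: real
  assume "x \<in> S" "y \<in> S" "x \<noteq> y \<and> 0 < u \<and> u < 1"
  then have "a * f (u * x + (1 - u) * y) < a * (u * f x + (1 - u) * f y)"
    using assms unfolding strictly_convex_on_def by simp
  then show "a * f (u * x + (1 - u) * y) < u * (a * f x) + (1 - u) * (a * f y)"
    by (simp add: algebra_simps)
qed (use assms in \<open>simp add: strictly_convex_on_def\<close>)

lemma strictly_convex_on_add: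
  assumes "strictly_convex_on S f" and "strictly_convex_on S g"
  shows "strictly_convex_on S (\<lambda>x. f x + g x)"
  unfolding strictly_convex_on_def
proof (intro conjI ballI allI impI)
  fix x y u :: real
  assume "x \<in> S" "y \<in> S" "x \<noteq> y \<and> 0 < u \<and> u < 1"
  then have "f (u * x + (1 - u) * y) + g (u * x + (1 - u) * y)
      < (u * f x + (1 - u) * f y) + (u * g x + (1 - u) * g y)"
    using assms unfolding strictly_convex_on_def by (intro add_strict_mono) auto
  then show "f (u * x + (1 - u) * y) + g (u * x + (1 - u) * y)
      < u * (f x + g x) + (1 - u) * (f y + g y)"
    by (simp add: algebra_simps)
qed (use assms in \<open>simp add: strictly_convex_on_def\<close>)

lemma strictly_convex_on_comp_affine:
  assumes f: "strictly_convex_on S f" and "m \<noteq> 0" and "convex T"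
    and T: "\<And>x. x \<in> T \<Longrightarrow> m * x + k \<in> S"
  shows "strictly_convex_on T (\<lambda>x. f (m * x + k))"
  unfolding strictly_convex_on_def
proof (intro conjI ballI allI impI)
  fix x y u :: real
  assume "x \<in> T" "y \<in> T" and xyu: "x \<noteq> y \<and> 0 < u \<and> u < 1"
  have "m * x + k \<noteq> m * y + k"
    using xyu \<open>m \<noteq> 0\<close> by simp
  moreover have "m * (u * x + (1 - u) * y) + k = u * (m * x + k) + (1 - u) * (m * y + k)"
    by (simp add: algebra_simps)
  ultimately show "f (m * (u * x + (1 - u) * y) + k) < u * f (m * x + k) + (1 - u) * f (m * y + k)"
    using f T \<open>x \<in> T\<close> \<open>y \<in> T\<close> xyu unfolding strictly_convex_on_def by auto
qed fact

lemma strictly_convex_on_increment_less: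
  assumes g: "strictly_convex_on S g" and "u \<in> S" "v + d \<in> S" and "0 < d" "u < v"
  shows "g (u + d) - g u < g (v + d) - g v"
proof -
  have "g (u + d) * (v + d - u) < (v - u) * g u + d * g (v + d)"
    using strictly_convex_onD_chord[OF g, of u "v + d" "u + d"] assms by (simp add: algebra_simps)
  moreover have "g v * (v + d - u) < d * g u + (v - u) * g (v + d)"
    using strictly_convex_onD_chord[OF g, of u "v + d" v] assms by (simp add: algebra_simps)
  ultimately have "(g (u + d) - g u) * (v + d - u) < (g (v + d) - g v) * (v + d - u)"
    by (simp add: algebra_simps)
  then show ?thesis
    using assms by (simp add: mult_less_cancel_right)
qed

lemma strictly_convex_on_affine_coincidence_card_le_2:
  assumes "strictly_convex_on S g"
  shows "finite {x \<in> S. g x = s * x + t} \<and> card {x \<in> S. g x = s * x + t} \<le> 2"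
proof (rule card_le_2_if_no_increasing_triple)
  fix x y z assume "x \<in> {x \<in> S. g x = s * x + t}" "y \<in> {x \<in> S. g x = s * x + t}"
    "z \<in> {x \<in> S. g x = s * x + t}" "x < y" "y < z"
  then show False
    using strictly_convex_onD_chord[OF assms, of x z y] by (auto simp: algebra_simps)
qed

lemma Rolle_has_real_derivative:
  fixes F F' :: "real \<Rightarrow> real"
  assumes "a < b" and "F a = F b"
    and der: "\<And>t. a \<le> t \<Longrightarrow> t \<le> b \<Longrightarrow> (F has_real_derivative F' t) (at t)"
  obtains z where "a < z" "z < b" "F' z = 0"
proof -
  have cont: "continuous_on {a..b} F"
    using der by (intro DERIV_atLeastAtMost_imp_continuous_on) blast
  have der': "(F has_derivative (*) (F' t)) (at t)" if "a < t" "t < b" for t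
    using der[of t] that by (simp add: has_field_derivative_def)
  obtain z where z: "a < z" "z < b" "(*) (F' z) = (\<lambda>v. 0)"
    using Rolle_deriv[OF assms(1,2) cont der'] by blast
  from fun_cong[OF z(3), of 1] have "F' z = 0"
    by simp
  with z(1,2) show thesis
    by (rule that)
qed

lemma strongly_hyperbolic_pos: "strongly_hyperbolic f \<Longrightarrow> 0 < x \<Longrightarrow> 0 < f x"
  unfolding strongly_hyperbolic_def by blast

lemma strongly_hyperbolic_tendsto_0: "strongly_hyperbolic f \<Longrightarrow> (f \<longlongrightarrow> 0) at_top"
  unfolding strongly_hyperbolic_def by blast

lemma strongly_hyperbolic_has_real_derivative:
  assumes "strongly_hyperbolic f" and "0 < x"
  shows "(f has_real_derivative deriv f x) (at x)"
  using assms unfolding strongly_hyperbolic_def DERIV_deriv_iff_real_differentiable by blast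

lemma strongly_hyperbolic_deriv_neg:
  assumes f: "strongly_hyperbolic f" and x: "0 < x"
  shows "deriv f x < 0"
proof (rule ccontr)
  assume "\<not> deriv f x < 0"
  have convex: "convex_on {0<..} f"
    using f unfolding strongly_hyperbolic_def by (blast intro: strictly_convex_on_imp_convex_on)
  have ge: "f x \<le> f y" if "x < y" for y
  proof -
    have "deriv f x * (y - x) \<le> f y - f x"
    proof (rule convex_on_imp_above_tangent[OF convex])
      show "(f has_real_derivative deriv f x) (at x within {0<..})"
        using strongly_hyperbolic_has_real_derivative[OF f x]
        by (rule has_field_derivative_at_within)
    qed (use x that in \<open>auto simp: interior_open convex_connected\<close>)
    moreover have "0 \<le> deriv f x * (y - x)"
      using \<open>\<not> deriv f x < 0\<close> that by simp
    ultimately show ?thesis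
      by simp
  qed
  have "eventually (\<lambda>y. f y < f x) at_top"
    using order_tendstoD(2)[OF strongly_hyperbolic_tendsto_0[OF f]] strongly_hyperbolic_pos[OF f x]
    by blast
  then obtain N where "\<And>y. N \<le> y \<Longrightarrow> f y < f x"
    unfolding eventually_at_top_linorder by blast
  from this[of "max N (x + 1)"] show False
    using ge[of "max N (x + 1)"] by (simp add: less_max_iff_disj)
qed

lemma strongly_hyperbolic_decreasing:
  assumes f: "strongly_hyperbolic f" and "0 < p" "p < q"
  shows "f q < f p"
proof (rule DERIV_neg_imp_decreasing[OF \<open>p < q\<close>])
  fix x assume "p \<le> x" "x \<le> q"
  then have "0 < x"
    using \<open>0 < p\<close> by simp
  then show "\<exists>y. DERIV f x :> y \<and> y < 0"
    using strongly_hyperbolic_has_real_derivative[OF f] strongly_hyperbolic_deriv_neg[OF f] by blast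
qed

lemma strongly_hyperbolic_shift_strictly_convex:
  assumes "strongly_hyperbolic f" and "convex T" and "T \<subseteq> {- k<..}"
  shows "strictly_convex_on T (\<lambda>x. f (x + k))"
proof -
  have "strictly_convex_on T (\<lambda>x. f (1 * x + k))"
    by (rule strictly_convex_on_comp_affine) (use assms in \<open>auto simp: strongly_hyperbolic_def\<close>)
  then show ?thesis
    by simp
qed

lemma strongly_hyperbolic_reflect_strictly_convex:
  assumes "strongly_hyperbolic f" and "convex T" and "T \<subseteq> {..< - k}"
  shows "strictly_convex_on T (\<lambda>x. f (- x - k))"
proof -
  have "strictly_convex_on T (\<lambda>x. f ((- 1) * x + (- k)))"
    by (rule strictly_convex_on_comp_affine) (use assms in \<open>auto simp: strongly_hyperbolic_def\<close>)
  then show ?thesis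
    by simp
qed

definition shift_diff :: "(real \<Rightarrow> real) \<Rightarrow> real \<Rightarrow> real \<Rightarrow> real \<Rightarrow> real \<Rightarrow> real" where
  "shift_diff f A A' d u = A * f (u + d) - A' * f u"

lemma shift_diff_has_real_derivative:
  assumes f: "strongly_hyperbolic f" and "0 < u" "0 < d"
  shows "(shift_diff f A A' d has_real_derivative shift_diff (deriv f) A A' d u) (at u)"
proof -
  have "((\<lambda>u. u + d) has_real_derivative 1) (at u)"
    by (auto intro!: derivative_eq_intros)
  from DERIV_chain2[OF strongly_hyperbolic_has_real_derivative[OF f] this]
  have "((\<lambda>u. f (u + d)) has_real_derivative deriv f (u + d)) (at u)"
    using assms by simp
  from DERIV_diff[OF DERIV_cmult[OF this]
      DERIV_cmult[OF strongly_hyperbolic_has_real_derivative[OF f \<open>0 < u\<close>]]]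
  show ?thesis
    unfolding shift_diff_def[abs_def] .
qed

(* The convexity of ln |f'| enters here: the hypothesis says ln |f'(p + d)| - ln |f'(p)| is at
   least ln A' - ln A, and this increment strictly increases with p. *)
lemma shift_diff_deriv_neg_beyond:
  assumes f: "strongly_hyperbolic f" and "0 < A" "0 < A'" "0 < d" "0 < p" "p < q"
    and "shift_diff (deriv f) A A' d p \<le> 0"
  shows "shift_diff (deriv f) A A' d q < 0"
proof -
  define g where "g x = ln \<bar>deriv f x\<bar>" for x
  have neg: "deriv f x < 0" if "0 < x" for x
    using strongly_hyperbolic_deriv_neg[OF f that] .
  have ln_split: "ln (B * \<bar>deriv f x\<bar>) = ln B + g x" if "0 < B" "0 < x" for B x
    using that neg[of x] ln_mult[of B "\<bar>deriv f x\<bar>"] unfolding g_def by simp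
  have "A' * \<bar>deriv f p\<bar> \<le> A * \<bar>deriv f (p + d)\<bar>"
    using assms neg[of p] neg[of "p + d"] by (simp add: shift_diff_def)
  then have "ln (A' * \<bar>deriv f p\<bar>) \<le> ln (A * \<bar>deriv f (p + d)\<bar>)"
    using assms neg[of p] neg[of "p + d"] by (subst ln_le_cancel_iff) (auto simp: mult_pos_neg)
  then have "ln A' + g p \<le> ln A + g (p + d)"
    using assms by (simp add: ln_split del: ln_le_cancel_iff)
  moreover have "g (p + d) - g p < g (q + d) - g q"
    using f assms unfolding strongly_hyperbolic_def g_def
    by (intro strictly_convex_on_increment_less[of "{0<..}"]) auto
  ultimately have "ln A' + g q < ln A + g (q + d)"
    by simp
  then have "ln (A' * \<bar>deriv f q\<bar>) < ln (A * \<bar>deriv f (q + d)\<bar>)"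
    using assms by (simp add: ln_split del: ln_less_cancel_iff)
  then have "A' * \<bar>deriv f q\<bar> < A * \<bar>deriv f (q + d)\<bar>"
    using assms neg[of q] neg[of "q + d"]
    by (subst (asm) ln_less_cancel_iff) (auto simp: mult_pos_neg)
  then show ?thesis
    using assms neg[of q] neg[of "q + d"] by (simp add: shift_diff_def)
qed

lemma shift_diff_decreasing_beyond_repeated_value:
  assumes f: "strongly_hyperbolic f" and "0 < A" "0 < A'" "0 < d"
    and "0 < u1" "u1 < u2" "shift_diff f A A' d u1 = shift_diff f A A' d u2"
    and "u2 \<le> x" "x < y"
  shows "shift_diff f A A' d y < shift_diff f A A' d x"
proof -
  have der: "(shift_diff f A A' d has_real_derivative shift_diff (deriv f) A A' d t) (at t)"
    if "u1 \<le> t" for t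
    using shift_diff_has_real_derivative[OF f _ \<open>0 < d\<close>] assms that by simp
  obtain p where p: "u1 < p" "p < u2" "shift_diff (deriv f) A A' d p = 0"
    using Rolle_has_real_derivative[OF \<open>u1 < u2\<close> assms(7) der] by auto
  show ?thesis
  proof (rule DERIV_neg_imp_decreasing[OF \<open>x < y\<close>])
    fix t assume "x \<le> t" "t \<le> y"
    then have "p < t"
      using p assms by simp
    then have "shift_diff (deriv f) A A' d t < 0"
      using shift_diff_deriv_neg_beyond[OF f assms(2-4), of p t] p assms by simp
    moreover have "u1 \<le> t"
      using \<open>p < t\<close> p by simp
    ultimately show "\<exists>D. (shift_diff f A A' d has_real_derivative D) (at t) \<and> D < 0"
      using der by blast
  qed
qed

definition shift_level :: "(real \<Rightarrow> real) \<Rightarrow> real \<Rightarrow> real \<Rightarrow> real \<Rightarrow> real \<Rightarrow> real set" where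
  "shift_level f A A' d K = {u. 0 < u \<and> shift_diff f A A' d u = K}"

lemma shift_level_card_le_2:
  assumes "strongly_hyperbolic f" and "0 < A" "0 < A'" "0 < d"
  shows "finite (shift_level f A A' d K) \<and> card (shift_level f A A' d K) \<le> 2"
proof (rule card_le_2_if_no_increasing_triple)
  fix u1 u2 u3
  assume "u1 \<in> shift_level f A A' d K" "u2 \<in> shift_level f A A' d K" "u3 \<in> shift_level f A A' d K"
    and "u1 < u2" "u2 < u3"
  then show False
    using shift_diff_decreasing_beyond_repeated_value[OF assms, of u1 u2 u2 u3]
    by (simp add: shift_level_def)
qed

(* Beyond its second solution the function decreases strictly, so it stays below K <= 0,
   contradicting its limit 0. *)
lemma shift_level_nonpos_card_le_1:
  assumes f: "strongly_hyperbolic f" and "0 < A" "0 < A'" "0 < d" and "K \<le> 0"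
  shows "finite (shift_level f A A' d K) \<and> card (shift_level f A A' d K) \<le> 1"
proof (rule card_le_1_if_no_increasing_pair)
  fix u1 u2
  assume "u1 \<in> shift_level f A A' d K" "u2 \<in> shift_level f A A' d K" "u1 < u2"
  then have u: "0 < u1" "u1 < u2" "shift_diff f A A' d u1 = K" "shift_diff f A A' d u2 = K"
    by (simp_all add: shift_level_def)
  let ?\<phi> = "shift_diff f A A' d"
  have dec: "?\<phi> y < ?\<phi> x" if "u2 \<le> x" "x < y" for x y
    using shift_diff_decreasing_beyond_repeated_value[OF assms(1-4), of u1 u2 x y] u that by simp
  have "?\<phi> (u2 + 1) < 0"
    using dec[of u2 "u2 + 1"] u \<open>K \<le> 0\<close> by simp
  moreover have "((\<lambda>x. A' * f x) \<longlongrightarrow> 0) at_top"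
    using tendsto_mult_left[OF strongly_hyperbolic_tendsto_0[OF f], of A'] by simp
  ultimately have "eventually (\<lambda>x. A' * f x < - ?\<phi> (u2 + 1)) at_top"
    using order_tendstoD(2) by (metis neg_0_less_iff_less)
  then obtain N where N: "\<And>x. N \<le> x \<Longrightarrow> A' * f x < - ?\<phi> (u2 + 1)"
    unfolding eventually_at_top_linorder by blast
  define x where "x = max N (u2 + 2)"
  have x: "N \<le> x" "u2 + 1 < x" "0 < x + d"
    using u \<open>0 < d\<close> by (auto simp: x_def)
  have "0 < A * f (x + d)"
    using strongly_hyperbolic_pos[OF f x(3)] assms by simp
  then have "?\<phi> (u2 + 1) < ?\<phi> x"
    using N[OF x(1)] by (simp add: shift_diff_def)
  moreover have "?\<phi> x < ?\<phi> (u2 + 1)"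
    using dec[OF _ x(2)] by simp
  ultimately show False
    by simp
qed

lemma shift_level_nonneg_bounds:
  assumes f: "strongly_hyperbolic f" and "0 < A'" "0 < d"
    and "u \<in> shift_level f A A' d K" and "0 \<le> K"
  shows "A' < A \<and> K < A * f d"
proof -
  have u: "0 < u" "A * f (u + d) - A' * f u = K"
    using assms(4) by (simp_all add: shift_level_def shift_diff_def)
  have f_pos: "0 < f (u + d)" and dec: "f (u + d) < f u" "f (u + d) < f d"
    using strongly_hyperbolic_pos[OF f] strongly_hyperbolic_decreasing[OF f] assms u by simp_all
  then have "A' * f (u + d) < A' * f u"
    using assms by simp
  also have "\<dots> \<le> A * f (u + d)"
    using u \<open>0 \<le> K\<close> by simp
  finally have "A' < A"
    using f_pos by simp
  moreover have "A * f (u + d) < A * f d"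
    using dec \<open>A' < A\<close> assms by simp
  moreover have "0 < A' * f u"
    using strongly_hyperbolic_pos[OF f] assms u by simp
  ultimately show ?thesis
    using u by simp
qed

lemma f_abc_right: "- b < x \<Longrightarrow> f_abc f1 f2 a b c x = a * f1 (x + b) + c"
  by (simp add: f_abc_def)

lemma f_abc_left: "x < - b \<Longrightarrow> f_abc f1 f2 a b c x = - a * f2 (- x - b) + c"
  by (simp add: f_abc_def)

lemma f_abc_eq_unit: "f_abc f1 f2 a b c x = a * f_abc f1 f2 1 b 0 x + c"
  by (simp add: f_abc_def)

lemma line_st_Int_line_st_card_le_2:
  assumes "(s, t) \<noteq> (s', t')"
  shows "finite (line_st s t \<inter> line_st s' t') \<and> card (line_st s t \<inter> line_st s' t') \<le> 2"
proof -
  let ?Z = "{x. s * x + t = s' * x + t'}"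
  have sub: "line_st s t \<inter> line_st s' t' \<subseteq> (\<lambda>x. (Fin x, Fin (s * x + t))) ` ?Z \<union> {(Infty, Infty)}"
    unfolding line_st_def by auto
  have "finite ?Z \<and> card ?Z \<le> 1"
  proof (rule card_le_1_if_no_increasing_pair)
    fix x y assume "x \<in> ?Z" "y \<in> ?Z" "x < y"
    then have "(s - s') * (y - x) = 0" and "t = t' + (s' - s) * x"
      by (simp_all add: algebra_simps)
    then show False
      using assms \<open>x < y\<close> by simp
  qed
  then have "finite ((\<lambda>x. (Fin x, Fin (s * x + t))) ` ?Z \<union> {(Infty, Infty)})
      \<and> card ((\<lambda>x. (Fin x, Fin (s * x + t))) ` ?Z \<union> {(Infty, Infty)}) \<le> 1 + 1"
    by (intro finite_card_Un_le finite_card_image_le) simp_all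
  from finite_card_le_subset[OF sub this] show ?thesis
    by simp
qed

lemma graph_coincidence_shifted_subset:
  assumes "b' < b"
  shows "{x. x \<noteq> - b \<and> x \<noteq> - b' \<and> f_abc f1 f2 a b c x = f_abc f1 f2 a' b' c' x}
    \<subseteq> (\<lambda>u. u - b') ` shift_level f1 a a' (b - b') (c' - c)
      \<union> (\<lambda>u. - u - b) ` shift_level f2 a' a (b - b') (c' - c)
      \<union> {x \<in> {- b<..<- b'}. a * f1 (x + b) + a' * f2 (- x - b') = c' - c}"
proof
  fix x
  assume "x \<in> {x. x \<noteq> - b \<and> x \<noteq> - b' \<and> f_abc f1 f2 a b c x = f_abc f1 f2 a' b' c' x}"
  then have x: "x \<noteq> - b" "x \<noteq> - b'" and eq: "f_abc f1 f2 a b c x = f_abc f1 f2 a' b' c' x"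
    by simp_all
  have shift: "x + b' + (b - b') = x + b" "- x - b + (b - b') = - x - b'"
    by simp_all
  show "x \<in> (\<lambda>u. u - b') ` shift_level f1 a a' (b - b') (c' - c)
      \<union> (\<lambda>u. - u - b) ` shift_level f2 a' a (b - b') (c' - c)
      \<union> {x \<in> {- b<..<- b'}. a * f1 (x + b) + a' * f2 (- x - b') = c' - c}"
  proof (cases "- b' < x")
    case True
    then have "x + b' \<in> shift_level f1 a a' (b - b') (c' - c)"
      using eq assms by (simp add: shift shift_level_def shift_diff_def f_abc_right)
    then show ?thesis
      by (intro UnI1 image_eqI[where x = "x + b'"]) simp_all
  next
    case False
    show ?thesis
    proof (cases "- b < x")
      case True
      then show ?thesis
        using eq \<open>\<not> - b' < x\<close> x by (simp add: f_abc_right f_abc_left)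
    next
      case False
      then have "x < - b"
        using x by simp
      then have "- x - b \<in> shift_level f2 a' a (b - b') (c' - c)"
        using eq assms by (simp add: shift shift_level_def shift_diff_def f_abc_left)
      then show ?thesis
        by (intro UnI1 UnI2 image_eqI[where x = "- x - b"]) simp_all
    qed
  qed
qed

context
  fixes f1 f2 :: "real \<Rightarrow> real"
  assumes f1: "strongly_hyperbolic f1" and f2: "strongly_hyperbolic f2"
begin

lemma graph_line_coincidence_card_le_2:
  assumes "0 < a" "s < 0"
  shows "finite {x. x \<noteq> - b \<and> f_abc f1 f2 a b c x = s * x + t}
    \<and> card {x. x \<noteq> - b \<and> f_abc f1 f2 a b c x = s * x + t} \<le> 2"
proof -
  define R where "R = {x \<in> {- b<..}. a * f1 (x + b) = s * x + (t - c)}"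
  define L where "L = {x \<in> {..< - b}. a * f2 (- x - b) = (- s) * x + (c - t)}"
  have R: "finite R \<and> card R \<le> 2"
    unfolding R_def using f1 \<open>0 < a\<close>
    by (intro strictly_convex_on_affine_coincidence_card_le_2 strictly_convex_on_cmul
        strongly_hyperbolic_shift_strictly_convex) auto
  have L: "finite L \<and> card L \<le> 2"
    unfolding L_def using f2 \<open>0 < a\<close>
    by (intro strictly_convex_on_affine_coincidence_card_le_2 strictly_convex_on_cmul
        strongly_hyperbolic_reflect_strictly_convex) auto
  have "R = {} \<or> L = {}"
  proof (rule ccontr)
    assume "\<not> (R = {} \<or> L = {})"
    then obtain x y where "x \<in> R" "y \<in> L"
      by blast
    then have x: "- b < x" "a * f1 (x + b) = s * x + (t - c)"
      and y: "y < - b" "a * f2 (- y - b) = (- s) * y + (c - t)"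
      unfolding R_def L_def by auto
    have "0 < a * f1 (x + b)" "0 < a * f2 (- y - b)"
      using strongly_hyperbolic_pos[OF f1, of "x + b"] strongly_hyperbolic_pos[OF f2, of "- y - b"]
        \<open>0 < a\<close> x(1) y(1) by simp_all
    then have "s * y < s * x"
      using x y by linarith
    moreover have "s * x < s * y"
      using mult_strict_left_mono_neg[of y x s] x y \<open>s < 0\<close> by simp
    ultimately show False
      by simp
  qed
  moreover have "{x. x \<noteq> - b \<and> f_abc f1 f2 a b c x = s * x + t} \<subseteq> R \<union> L"
  proof
    fix x assume x: "x \<in> {x. x \<noteq> - b \<and> f_abc f1 f2 a b c x = s * x + t}"
    show "x \<in> R \<union> L"
    proof (cases "- b < x")
      case True
      then show ?thesis
        using x f_abc_right[OF True, of f1 f2 a c] by (simp add: R_def)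
    next
      case False
      then have "x < - b"
        using x by simp
      then show ?thesis
        using x f_abc_left[OF \<open>x < - b\<close>, of f1 f2 a c] by (simp add: L_def)
    qed
  qed
  ultimately show ?thesis
    using finite_card_le_subset[OF _ R] finite_card_le_subset[OF _ L] by auto
qed

lemma f_abc_unit_ne_0: "x \<noteq> - b \<Longrightarrow> f_abc f1 f2 1 b 0 x \<noteq> 0"
  using strongly_hyperbolic_pos[OF f1, of "x + b"] strongly_hyperbolic_pos[OF f2, of "- x - b"]
  by (auto simp: f_abc_def)

lemma f_abc_unit_inj_on: "inj_on (f_abc f1 f2 1 b 0) {x. x \<noteq> - b}"
proof (rule linorder_inj_onI')
  fix x y assume "x \<in> {x. x \<noteq> - b}" "y \<in> {x. x \<noteq> - b}" "x < y"
  then have xy: "x \<noteq> - b" "y \<noteq> - b" "x < y"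
    by simp_all
  show "f_abc f1 f2 1 b 0 x \<noteq> f_abc f1 f2 1 b 0 y"
  proof (cases "- b < x")
    case True
    then show ?thesis
      using strongly_hyperbolic_decreasing[OF f1, of "x + b" "y + b"] xy by (simp add: f_abc_def)
  next
    case False
    then have "x < - b"
      using xy by simp
    show ?thesis
    proof (cases "y < - b")
      case True
      then show ?thesis
        using strongly_hyperbolic_decreasing[OF f2, of "- y - b" "- x - b"] xy
        by (simp add: f_abc_def)
    next
      case False
      then show ?thesis
        using strongly_hyperbolic_pos[OF f1, of "y + b"]
          strongly_hyperbolic_pos[OF f2, of "- x - b"] \<open>x < - b\<close> xy
        by (simp add: f_abc_def)
    qed
  qed
qed

lemma graph_coincidence_same_pole_card:
  assumes "(a, c) \<noteq> (a', c')"
  shows "finite {x. x \<noteq> - b \<and> f_abc f1 f2 a b c x = f_abc f1 f2 a' b c' x}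
    \<and> card {x. x \<noteq> - b \<and> f_abc f1 f2 a b c x = f_abc f1 f2 a' b c' x} \<le> (if c = c' then 0 else 1)"
proof -
  let ?v = "f_abc f1 f2 1 b 0"
  let ?Z = "{x. x \<noteq> - b \<and> f_abc f1 f2 a b c x = f_abc f1 f2 a' b c' x}"
  have Z: "x \<in> ?Z \<longleftrightarrow> x \<noteq> - b \<and> (a - a') * ?v x = c' - c" for x
    by (subst (1 2) f_abc_eq_unit) (auto simp: algebra_simps)
  have a_ne: "a \<noteq> a'" if "x \<in> ?Z" for x
    using that assms unfolding Z by auto
  have Z1: "finite ?Z \<and> card ?Z \<le> 1"
  proof (rule card_le_1_if_no_increasing_pair)
    fix x y assume "x \<in> ?Z" "y \<in> ?Z" "x < y"
    then have "(a - a') * ?v x = (a - a') * ?v y" "a \<noteq> a'" "x \<noteq> - b" "y \<noteq> - b"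
      using a_ne[of x] unfolding Z by simp_all
    then have "x = y"
      using inj_onD[OF f_abc_unit_inj_on[of b], of x y] by simp
    then show False
      using \<open>x < y\<close> by simp
  qed
  have "x \<notin> ?Z" if "c = c'" for x
  proof
    assume "x \<in> ?Z"
    then have "(a - a') * ?v x = 0" "a \<noteq> a'" "x \<noteq> - b"
      using that a_ne[of x] unfolding Z by simp_all
    then show False
      using f_abc_unit_ne_0 by simp
  qed
  with Z1 show ?thesis
    by auto
qed

lemma graph_coincidence_middle_card_le_2:
  assumes "0 < a" "0 < a'"
  shows "finite {x \<in> {- b<..<- b'}. a * f1 (x + b) + a' * f2 (- x - b') = K}
    \<and> card {x \<in> {- b<..<- b'}. a * f1 (x + b) + a' * f2 (- x - b') = K} \<le> 2"
proof -
  have "strictly_convex_on {- b<..<- b'} (\<lambda>x. a * f1 (x + b) + a' * f2 (- x - b'))"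
    using assms f1 f2
    by (intro strictly_convex_on_add strictly_convex_on_cmul
        strongly_hyperbolic_shift_strictly_convex strongly_hyperbolic_reflect_strictly_convex) auto
  from strictly_convex_on_affine_coincidence_card_le_2[OF this, of 0 K] show ?thesis
    by simp
qed

lemma graph_coincidence_middle_level:
  assumes "0 < a" "0 < a'" "- b < x" "x < - b'" "a * f1 (x + b) + a' * f2 (- x - b') = K"
  shows "a * f1 (b - b') + a' * f2 (b - b') < K"
proof -
  have "f1 (b - b') < f1 (x + b)" "f2 (b - b') < f2 (- x - b')"
    using strongly_hyperbolic_decreasing[OF f1, of "x + b" "b - b'"]
      strongly_hyperbolic_decreasing[OF f2, of "- x - b'" "b - b'"] assms by simp_all
  then show ?thesis
    using assms by (smt (verit) mult_strict_left_mono)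
qed

lemma graph_coincidence_shifted_single_region:
  assumes "0 < a" "0 < a'" "b' < b" "c \<le> c'"
  shows "{x. x \<noteq> - b \<and> x \<noteq> - b' \<and> f_abc f1 f2 a b c x = f_abc f1 f2 a' b' c' x}
      \<subseteq> (\<lambda>u. u - b') ` shift_level f1 a a' (b - b') (c' - c)
    \<or> {x. x \<noteq> - b \<and> x \<noteq> - b' \<and> f_abc f1 f2 a b c x = f_abc f1 f2 a' b' c' x}
      \<subseteq> (\<lambda>u. - u - b) ` shift_level f2 a' a (b - b') (c' - c)
    \<or> c \<noteq> c' \<and> {x. x \<noteq> - b \<and> x \<noteq> - b' \<and> f_abc f1 f2 a b c x = f_abc f1 f2 a' b' c' x}
      \<subseteq> {x \<in> {- b<..<- b'}. a * f1 (x + b) + a' * f2 (- x - b') = c' - c}"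
    (is "?Z \<subseteq> ?R \<or> ?Z \<subseteq> ?L \<or> c \<noteq> c' \<and> ?Z \<subseteq> ?M")
proof -
  define d where "d = b - b'"
  have "0 < d" "0 \<le> c' - c"
    using assms by (simp_all add: d_def)
  have sub: "?Z \<subseteq> ?R \<union> ?L \<union> ?M"
    by (rule graph_coincidence_shifted_subset[OF \<open>b' < b\<close>])
  have pos: "0 < a * f1 d" "0 < a' * f2 d"
    using strongly_hyperbolic_pos[OF f1 \<open>0 < d\<close>] strongly_hyperbolic_pos[OF f2 \<open>0 < d\<close>] assms
    by simp_all
  have R: "a' < a \<and> c' - c < a * f1 d" if "?R \<noteq> {}"
    using that shift_level_nonneg_bounds[OF f1 \<open>0 < a'\<close> \<open>0 < d\<close> _ \<open>0 \<le> c' - c\<close>]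
    unfolding d_def by blast
  have L: "a < a' \<and> c' - c < a' * f2 d" if "?L \<noteq> {}"
    using that shift_level_nonneg_bounds[OF f2 \<open>0 < a\<close> \<open>0 < d\<close> _ \<open>0 \<le> c' - c\<close>]
    unfolding d_def by blast
  have M: "a * f1 d + a' * f2 d < c' - c" if "?M \<noteq> {}"
  proof -
    from that obtain x where "- b < x" "x < - b'" "a * f1 (x + b) + a' * f2 (- x - b') = c' - c"
      by auto
    then show ?thesis
      unfolding d_def by (rule graph_coincidence_middle_level[OF assms(1,2)])
  qed
  show ?thesis
  proof (cases "?R = {}")
    case False
    then have "?L = {}" "?M = {}"
      using R L M pos by fastforce+
    then show ?thesis
      using sub by blast
  next
    case True
    show ?thesis
    proof (cases "?L = {}")
      case False
      then have "?M = {}"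
        using L M pos by fastforce
      then show ?thesis
        using sub \<open>?R = {}\<close> by blast
    next
      case True
      have "c \<noteq> c'" if "?M \<noteq> {}"
        using M[OF that] pos by simp
      then show ?thesis
        using sub \<open>?R = {}\<close> True by blast
    qed
  qed
qed

lemma graph_coincidence_shifted_card_of_le:
  assumes "0 < a" "0 < a'" "b' < b" "c \<le> c'"
  shows "finite {x. x \<noteq> - b \<and> x \<noteq> - b' \<and> f_abc f1 f2 a b c x = f_abc f1 f2 a' b' c' x}
    \<and> card {x. x \<noteq> - b \<and> x \<noteq> - b' \<and> f_abc f1 f2 a b c x = f_abc f1 f2 a' b' c' x}
      \<le> (if c = c' then 1 else 2)"
    (is "finite ?Z \<and> card ?Z \<le> ?n")
proof -
  have "0 < b - b'"
    using assms by simp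
  have level: "finite (shift_level f A A' (b - b') (c' - c))
      \<and> card (shift_level f A A' (b - b') (c' - c)) \<le> ?n"
    if "strongly_hyperbolic f" "0 < A" "0 < A'" for f A A'
    using shift_level_card_le_2[OF that \<open>0 < b - b'\<close>]
      shift_level_nonpos_card_le_1[OF that \<open>0 < b - b'\<close>]
    by simp
  consider "?Z \<subseteq> (\<lambda>u. u - b') ` shift_level f1 a a' (b - b') (c' - c)"
    | "?Z \<subseteq> (\<lambda>u. - u - b) ` shift_level f2 a' a (b - b') (c' - c)"
    | "c \<noteq> c'" "?Z \<subseteq> {x \<in> {- b<..<- b'}. a * f1 (x + b) + a' * f2 (- x - b') = c' - c}"
    using graph_coincidence_shifted_single_region[OF assms] by blast
  then show ?thesis
  proof cases
    case 1
    then show ?thesis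
      using finite_card_le_subset finite_card_image_le level[OF f1 assms(1,2)] by blast
  next
    case 2
    then show ?thesis
      using finite_card_le_subset finite_card_image_le level[OF f2 assms(2,1)] by blast
  next
    case 3
    then show ?thesis
      using finite_card_le_subset[OF _ graph_coincidence_middle_card_le_2[OF assms(1,2)]] by simp
  qed
qed

lemma graph_coincidence_shifted_card_of_less:
  assumes "0 < a" "0 < a'" "b' < b" "c' < c"
  shows "finite {x. x \<noteq> - b \<and> x \<noteq> - b' \<and> f_abc f1 f2 a b c x = f_abc f1 f2 a' b' c' x}
    \<and> card {x. x \<noteq> - b \<and> x \<noteq> - b' \<and> f_abc f1 f2 a b c x = f_abc f1 f2 a' b' c' x} \<le> 2"
    (is "finite ?Z \<and> card ?Z \<le> 2")
proof -
  let ?R = "(\<lambda>u. u - b') ` shift_level f1 a a' (b - b') (c' - c)"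
  let ?L = "(\<lambda>u. - u - b) ` shift_level f2 a' a (b - b') (c' - c)"
  let ?M = "{x \<in> {- b<..<- b'}. a * f1 (x + b) + a' * f2 (- x - b') = c' - c}"
  have "0 < b - b'" "c' - c \<le> 0"
    using assms by simp_all
  have "0 < a * f1 (b - b') + a' * f2 (b - b')"
    using strongly_hyperbolic_pos[OF f1 \<open>0 < b - b'\<close>]
      strongly_hyperbolic_pos[OF f2 \<open>0 < b - b'\<close>] assms
    by (simp add: add_pos_pos)
  then have "?M = {}"
    using graph_coincidence_middle_level[OF assms(1,2)] assms(4) by force
  moreover have "?Z \<subseteq> ?R \<union> ?L \<union> ?M"
    by (rule graph_coincidence_shifted_subset[OF \<open>b' < b\<close>])
  ultimately have "?Z \<subseteq> ?R \<union> ?L"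
    by blast
  moreover have "finite (?R \<union> ?L) \<and> card (?R \<union> ?L) \<le> 1 + 1"
    by (intro finite_card_Un_le finite_card_image_le shift_level_nonpos_card_le_1[OF f1]
        shift_level_nonpos_card_le_1[OF f2] assms \<open>0 < b - b'\<close> \<open>c' - c \<le> 0\<close>)
  ultimately have "finite ?Z \<and> card ?Z \<le> 1 + 1"
    by (rule finite_card_le_subset)
  then show ?thesis
    by simp
qed

lemma graph_abc_Int_line_st_card_le_2:
  assumes "0 < a" "s < 0"
  shows "finite (graph_abc f1 f2 a b c \<inter> line_st s t)
    \<and> card (graph_abc f1 f2 a b c \<inter> line_st s t) \<le> 2"
proof -
  have "graph_abc f1 f2 a b c \<inter> line_st s t
      \<subseteq> (\<lambda>x. (Fin x, Fin (s * x + t))) ` {x. x \<noteq> - b \<and> f_abc f1 f2 a b c x = s * x + t}"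
    unfolding graph_abc_def line_st_def by auto
  then show ?thesis
    using graph_line_coincidence_card_le_2[OF assms]
    by (rule finite_card_le_subset[OF _ finite_card_image_le])
qed

lemma graph_abc_Int_graph_abc_card_le_2_of_le:
  assumes "0 < a" "0 < a'" "(a, b, c) \<noteq> (a', b', c')" "b' \<le> b"
  shows "finite (graph_abc f1 f2 a b c \<inter> graph_abc f1 f2 a' b' c')
    \<and> card (graph_abc f1 f2 a b c \<inter> graph_abc f1 f2 a' b' c') \<le> 2"
proof -
  let ?Z = "{x. x \<noteq> - b \<and> x \<noteq> - b' \<and> f_abc f1 f2 a b c x = f_abc f1 f2 a' b' c' x}"
  let ?E = "(if b = b' then {(Fin (- b), Infty)} else {})
    \<union> (if c = c' then {(Infty, Fin c)} else {})"
  have sub: "graph_abc f1 f2 a b c \<inter> graph_abc f1 f2 a' b' c'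
      \<subseteq> (\<lambda>x. (Fin x, Fin (f_abc f1 f2 a b c x))) ` ?Z \<union> ?E"
    unfolding graph_abc_def by auto
  have E: "finite ?E \<and> card ?E \<le> (if b = b' then 1 else 0) + (if c = c' then 1 else 0)"
    by (intro finite_card_Un_le) simp_all
  have Z: "finite ?Z \<and> card ?Z \<le> (if b = b' then 0 else 1) + (if c = c' then 0 else 1)"
  proof (cases "b = b'")
    case True
    then show ?thesis
      using graph_coincidence_same_pole_card[of a c a' c' b] assms by simp
  next
    case False
    then have "b' < b"
      using assms by simp
    show ?thesis
    proof (cases "c \<le> c'")
      case True
      from graph_coincidence_shifted_card_of_le[OF assms(1,2) \<open>b' < b\<close> True] show ?thesis
        using \<open>b \<noteq> b'\<close> by (cases "c = c'") simp_all
    next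
      case False
      then have "c' < c"
        by simp
      from graph_coincidence_shifted_card_of_less[OF assms(1,2) \<open>b' < b\<close> this] show ?thesis
        using \<open>b \<noteq> b'\<close> \<open>c' < c\<close> by simp
    qed
  qed
  have two: "(if b = b' then 0 else 1) + (if c = c' then 0 else 1)
      + ((if b = b' then 1 else 0) + (if c = c' then 1 else 0)) = (2::nat)"
    by simp
  from finite_card_le_subset[OF sub finite_card_Un_le[OF finite_card_image_le[OF Z] E]]
  show ?thesis
    by (simp only: two)
qed

lemma graph_abc_Int_graph_abc_card_le_2:
  assumes "0 < a" "0 < a'" "(a, b, c) \<noteq> (a', b', c')"
  shows "finite (graph_abc f1 f2 a b c \<inter> graph_abc f1 f2 a' b' c')
    \<and> card (graph_abc f1 f2 a b c \<inter> graph_abc f1 f2 a' b' c') \<le> 2"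
proof (cases "b' \<le> b")
  case False
  then show ?thesis
    using graph_abc_Int_graph_abc_card_le_2_of_le[of a' a b' c' b c] assms
    by (simp add: Int_commute)
qed (use graph_abc_Int_graph_abc_card_le_2_of_le assms in blast)

end

theorem theorem4p8:
  fixes f1 f2 :: "real \<Rightarrow> real"
  assumes "strongly_hyperbolic f1" and "strongly_hyperbolic f2"
    and "C \<in> Cminus f1 f2" and "D \<in> Cminus f1 f2" and "C \<noteq> D"
  shows "finite (C \<inter> D) \<and> card (C \<inter> D) \<le> 2"
proof -
  note graph_graph = graph_abc_Int_graph_abc_card_le_2[OF assms(1,2)]
  note graph_line = graph_abc_Int_line_st_card_le_2[OF assms(1,2)]
  from assms(3,4) consider
      (GG) a b c a' b' c'
        where "0 < a" "0 < a'" "C = graph_abc f1 f2 a b c" "D = graph_abc f1 f2 a' b' c'"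
    | (GL) a b c s t where "0 < a" "s < 0" "C = graph_abc f1 f2 a b c" "D = line_st s t"
    | (LG) a b c s t where "0 < a" "s < 0" "C = line_st s t" "D = graph_abc f1 f2 a b c"
    | (LL) s t s' t' where "C = line_st s t" "D = line_st s' t'"
    unfolding Cminus_def by blast
  then show ?thesis
  proof cases
    case GG
    then show ?thesis
      using graph_graph[of a a' b c b' c'] assms(5) by auto
  next
    case GL
    then show ?thesis
      using graph_line by simp
  next
    case LG
    then show ?thesis
      using graph_line[of a s b c t] by (simp add: Int_commute)
  next
    case LL
    then show ?thesis
      using line_st_Int_line_st_card_le_2[of s t s' t'] assms(5) by auto
  qed
qed

end
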